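(* Let $\mathcal X,\mathcal Y$ be Polish spaces and $(\gamma_n)_{n\ge1}$ a sequence of Borel probability measures on $\mathcal X\times\mathcal Y$ all having the same first marginal $\mu$. Then there exist Borel maps $\underline\xi:(0,1)\to\mathcal X$ and $\underline\xi_n:(0,1)\to\mathcal Y$, $n\ge1$, such that $(\underline\xi,\underline\xi_n)_\sharp m=\gamma_n$ for every $n$, where $m$ is Lebesgue measure on $(0,1)$.
   Context: $(\underline\xi,\underline\xi_n)_\sharp m$ denotes the image (push-forward) of the Lebesgue measure $m$ on $(0,1)$ under the map $u\mapsto(\underline\xi(u),\underline\xi_n(u))$. Note that $\underline\xi$ is required to be the same for all $n$. *)

theory Defs
  imports "HOL-Probability.Probability"
begin

end

(*
  Embedding Y into [0,1] by a Borel map with a Borel left inverse reduces the problem to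
  measures gamma on X x [0,1] with first marginal mu. For such gamma, Radon-Nikodym
  derivatives of A |-> gamma (A x ]-oo,q]) with respect to mu, q rational, are almost surely
  a distribution function in q; their right limits form a Borel conditional distribution
  function G(t|x), and with its quantile S(x,v) = inf {t. v <= G(t|x)} the map
  (x,v) |-> (x, S(x,v)) pushes mu (x) Lebesgue(0,1) forward to gamma.

  The measure mu (x) Lebesgue(0,1) is itself a Borel probability on the Polish space X x R,
  hence the image of Lebesgue measure on (0,1) under one Borel map u |-> (xi(u), V(u)).
  Then xi_n(u) = S_n(xi(u), V(u)) works for all n at once, because xi does not depend on n.
*)

theory Submission
  imports Defs
begin

section \<open>Borel embedding of Polish spaces into the unit interval\<close>

(* Base-4 digits restricted to {0, 2} never carry, so every digit is read off with two floors. *)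
definition quaternary_code :: "(nat \<Rightarrow> bool) \<Rightarrow> real" where
  "quaternary_code b = (\<Sum>i. (if b i then 2 else 0) / 4 ^ Suc i)"

definition quaternary_digit :: "real \<Rightarrow> nat \<Rightarrow> bool" where
  "quaternary_digit r n \<longleftrightarrow> \<lfloor>4 ^ Suc n * r\<rfloor> - 4 * \<lfloor>4 ^ n * r\<rfloor> = 2"

fun quaternary_prefix :: "(nat \<Rightarrow> bool) \<Rightarrow> nat \<Rightarrow> int" where
  "quaternary_prefix b 0 = 0"
| "quaternary_prefix b (Suc n) = 4 * quaternary_prefix b n + (if b n then 2 else 0)"

lemma sums_quaternary_twos: "(\<lambda>i. 2 / 4 ^ Suc i) sums (2 / 3 :: real)"
proof -
  have "(\<lambda>i. (1/2) * (1/4::real) ^ i) sums ((1/2) * (1 / (1 - 1/4)))"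
    by (intro sums_mult geometric_sums) simp
  then show ?thesis
    by (simp add: power_divide)
qed

lemma summable_quaternary_code: "summable (\<lambda>i. (if b i then 2 else 0) / (4::real) ^ Suc i)"
  by (rule summable_comparison_test[OF _ sums_summable[OF sums_quaternary_twos]]) auto

lemma quaternary_code_bounds: "0 \<le> quaternary_code b" "quaternary_code b \<le> 2 / 3"
proof -
  show "0 \<le> quaternary_code b"
    unfolding quaternary_code_def by (rule suminf_nonneg[OF summable_quaternary_code]) simp
  show "quaternary_code b \<le> 2 / 3"
    unfolding quaternary_code_def sums_unique[OF sums_quaternary_twos]
    by (rule suminf_le[OF _ summable_quaternary_code sums_summable[OF sums_quaternary_twos]]) simp
qed

lemma quaternary_code_unfold:
  "quaternary_code b = ((if b 0 then 2 else 0) + quaternary_code (\<lambda>i. b (Suc i))) / 4"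
  using suminf_split_head[OF summable_quaternary_code[of b]]
    suminf_divide[OF summable_quaternary_code[of "\<lambda>i. b (Suc i)"], of 4]
  unfolding quaternary_code_def by (simp add: field_simps)

lemma quaternary_code_scaled:
  "4 ^ n * quaternary_code b = quaternary_prefix b n + quaternary_code (\<lambda>i. b (i + n))"
proof (induction n)
  case (Suc n)
  then show ?case
    using quaternary_code_unfold[of "\<lambda>i. b (i + n)"] by (simp add: field_simps)
qed simp

lemma floor_quaternary_code: "\<lfloor>4 ^ n * quaternary_code b\<rfloor> = quaternary_prefix b n"
  unfolding floor_eq_iff quaternary_code_scaled
  using quaternary_code_bounds[of "\<lambda>i. b (i + n)"] by auto

lemma quaternary_digit_code: "quaternary_digit (quaternary_code b) = b"
  unfolding fun_eq_iff quaternary_digit_def floor_quaternary_code by simp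

lemma borel_measurable_quaternary_digit[measurable]:
  "Measurable.pred borel (\<lambda>r. quaternary_digit r n)"
  unfolding quaternary_digit_def by measurable

lemma dense_sequence_exists:
  obtains d :: "nat \<Rightarrow> 'a::{metric_space, second_countable_topology}"
  where "\<And>x r. r > 0 \<Longrightarrow> \<exists>k. dist x (d k) < r"
proof -
  obtain D :: "'a set" where D: "countable D" "\<And>X. open X \<Longrightarrow> X \<noteq> {} \<Longrightarrow> \<exists>d\<in>D. d \<in> X"
    using countable_dense_exists by blast
  have "\<exists>k. dist x (from_nat_into D k) < r" if "r > 0" for x r
  proof -
    obtain y where "y \<in> D" "y \<in> ball x r"
      using D(2)[of "ball x r"] \<open>r > 0\<close> by auto
    then show ?thesis
      by (metis D(1) from_nat_into_surj mem_ball)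
  qed
  then show thesis
    by (rule that)
qed

lemma borel_measurable_limit_exists:
  fixes f :: "nat \<Rightarrow> 'a \<Rightarrow> 'b::polish_space"
  assumes [measurable]: "\<And>i. f i \<in> borel_measurable M"
  obtains g where "g \<in> borel_measurable M" "\<And>x. convergent (\<lambda>i. f i x) \<Longrightarrow> (\<lambda>i. f i x) \<longlonglongrightarrow> g x"
proof -
  define h where "h i x = (if Cauchy (\<lambda>i. f i x) then f i x else undefined)" for i x
  have [measurable]: "h i \<in> borel_measurable M" for i
    unfolding h_def by measurable
  have "convergent (\<lambda>i. h i x)" for x
    by (cases "Cauchy (\<lambda>i. f i x)") (auto simp: h_def Cauchy_convergent_iff convergent_const)
  then have lim: "(\<lambda>i. h i x) \<longlonglongrightarrow> lim (\<lambda>i. h i x)" for x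
    by (simp add: convergent_LIMSEQ_iff)
  show thesis
  proof
    show "(\<lambda>x. lim (\<lambda>i. h i x)) \<in> borel_measurable M"
      by (rule borel_measurable_LIMSEQ_metric[OF _ lim]) measurable
    show "(\<lambda>i. f i x) \<longlonglongrightarrow> lim (\<lambda>i. h i x)" if "convergent (\<lambda>i. f i x)" for x
      using lim[of x] that by (simp add: h_def convergent_Cauchy)
  qed
qed

lemma LIMSEQ_dist_less_half_power:
  fixes f :: "nat \<Rightarrow> 'a::metric_space"
  assumes "\<And>j. dist (f j) x < (1/2) ^ j"
  shows "f \<longlonglongrightarrow> x"
proof (rule tendsto_dist_iff[THEN iffD2], rule tendsto_sandwich)
  show "\<forall>\<^sub>F j in sequentially. 0 \<le> dist (f j) x"
    by simp
  show "\<forall>\<^sub>F j in sequentially. dist (f j) x \<le> (1/2) ^ j"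
    by (intro always_eventually allI less_imp_le assms)
  show "(\<lambda>j. (1/2::real) ^ j) \<longlonglongrightarrow> 0"
    by (rule LIMSEQ_power_zero) simp
qed simp

lemma polish_borel_embedding:
  obtains e :: "'a::polish_space \<Rightarrow> real" and g :: "real \<Rightarrow> 'a"
  where "e \<in> borel_measurable borel" "g \<in> borel_measurable borel"
    "\<And>x. g (e x) = x" "\<And>x. e x \<in> {0..1}"
proof -
  obtain d :: "nat \<Rightarrow> 'a" where dense: "\<And>x r. r > 0 \<Longrightarrow> \<exists>k. dist x (d k) < r"
    by (erule dense_sequence_exists)
  \<comment> \<open>Bit \<open>(k, j)\<close> of the code of \<open>x\<close> says whether \<open>x\<close> is \<open>2^-j\<close>-close to the \<open>k\<close>-th dense point;
    decoding picks for every \<open>j\<close> the first such point, and these converge to \<open>x\<close>.\<close>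
  define near where "near x n \<longleftrightarrow> dist x (d (fst (prod_decode n))) < (1/2) ^ snd (prod_decode n)"
    for x n
  define e where "e x = quaternary_code (near x)" for x
  define approx where
    "approx j r = d (LEAST k. quaternary_digit r (prod_encode (k, j)))" for j r
  have [measurable]: "Measurable.pred borel (\<lambda>x. near x n)" for n
    unfolding near_def by measurable
  have [measurable]: "(\<lambda>r. LEAST k. quaternary_digit r (prod_encode (k, j))) \<in> borel \<rightarrow>\<^sub>M count_space UNIV"
    for j by measurable
  have approx_measurable: "approx j \<in> borel_measurable borel" for j
    unfolding approx_def by measurable
  obtain g where g: "g \<in> borel_measurable borel"
    "\<And>r. convergent (\<lambda>j. approx j r) \<Longrightarrow> (\<lambda>j. approx j r) \<longlonglongrightarrow> g r"
    using borel_measurable_limit_exists[of approx borel, OF approx_measurable] by blast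
  have approx_close: "dist x (approx j (e x)) < (1/2) ^ j" for x j
  proof -
    have "\<exists>k. near x (prod_encode (k, j))"
      using dense[of "(1/2) ^ j" x] by (simp add: near_def)
    then have "near x (prod_encode (LEAST k. near x (prod_encode (k, j)), j))"
      by (rule LeastI_ex)
    then show ?thesis
      by (simp add: approx_def e_def quaternary_digit_code near_def)
  qed
  have "(\<lambda>j. approx j (e x)) \<longlonglongrightarrow> x" for x
    using approx_close by (intro LIMSEQ_dist_less_half_power) (simp add: dist_commute)
  then have "g (e x) = x" for x
    using g(2) by (meson LIMSEQ_unique convergent_def)
  moreover have "e \<in> borel_measurable borel"
    unfolding e_def quaternary_code_def by measurable
  moreover have "e x \<in> {0..1}" for x
    using quaternary_code_bounds[of "near x"] by (simp add: e_def)
  ultimately show thesis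
    using that g(1) by blast
qed

lemma measurable_fst_borel[measurable]:
  "fst \<in> borel_measurable (borel :: ('a::second_countable_topology \<times> 'b::second_countable_topology) measure)"
  by (simp add: borel_measurable_continuous_onI continuous_on_fst)

lemma measurable_snd_borel[measurable]:
  "snd \<in> borel_measurable (borel :: ('a::second_countable_topology \<times> 'b::second_countable_topology) measure)"
  by (simp add: borel_measurable_continuous_onI continuous_on_snd)

lemma Times_in_sets_borel:
  "A \<in> sets borel \<Longrightarrow> B \<in> sets borel \<Longrightarrow>
    A \<times> B \<in> sets (borel :: ('a::second_countable_topology \<times> 'b::second_countable_topology) measure)"
  unfolding borel_prod[symmetric] by simp

lemma emeasure_distr_fst_borel:
  fixes \<gamma> :: "('a::second_countable_topology \<times> 'b::second_countable_topology) measure"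
  assumes "sets \<gamma> = sets borel" "A \<in> sets borel"
  shows "emeasure (distr \<gamma> borel fst) A = emeasure \<gamma> (A \<times> UNIV)"
proof -
  have "fst \<in> \<gamma> \<rightarrow>\<^sub>M borel"
    by (subst measurable_cong_sets[OF assms(1) refl]) simp
  then show ?thesis
    using assms sets_eq_imp_space_eq[OF assms(1)] by (simp add: emeasure_distr vimage_fst)
qed

lemma prob_space_distr_fst_borel:
  fixes \<gamma> :: "('a::second_countable_topology \<times> 'b::second_countable_topology) measure"
  assumes "sets \<gamma> = sets borel" "prob_space \<gamma>"
  shows "prob_space (distr \<gamma> borel fst)"
  by (rule prob_space.prob_space_distr[OF assms(2)]) (simp add: measurable_cong_sets[OF assms(1) refl])

lemma measure_eqI_Times_atMost:
  fixes M N :: "('a::second_countable_topology \<times> real) measure"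
  assumes sets: "sets M = sets borel" "sets N = sets borel" and "finite_measure M"
    and eq: "\<And>A t. A \<in> sets borel \<Longrightarrow> emeasure M (A \<times> {..t}) = emeasure N (A \<times> {..t})"
  shows "M = N"
proof (rule measure_eqI_generator_eq)
  let ?E = "{A \<times> B | A B. A \<in> sets (borel :: 'a measure) \<and> B \<in> range (atMost :: real \<Rightarrow> _)}"
  show "Int_stable ?E"
  proof (rule Int_stableI)
    fix X Y :: "('a \<times> real) set" assume "X \<in> ?E" "Y \<in> ?E"
    then obtain A B s t where "X = A \<times> {..s}" "Y = B \<times> {..t}" "A \<in> sets borel" "B \<in> sets borel"
      by auto
    then show "X \<inter> Y \<in> ?E"
      by (intro CollectI exI[of _ "A \<inter> B"] exI[of _ "{..min s t}"]) auto
  qed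
  show "?E \<subseteq> Pow UNIV" by simp
  have "sets (borel :: ('a \<times> real) measure) = sigma_sets UNIV ?E"
    unfolding borel_prod[symmetric]
    by (subst sets_pair_eq[of "sets borel" _ "{UNIV}" "range atMost" _ "range (\<lambda>n::nat. {..real n})"])
       (auto simp: borel_eq_atMost real_arch_simple sets.sigma_sets_eq[of borel, simplified])
  then show "sets M = sigma_sets UNIV ?E" "sets N = sigma_sets UNIV ?E"
    using sets by simp_all
  have "UNIV \<times> {..real n} \<in> ?E" for n
    by (intro CollectI exI conjI refl) auto
  then show "range (\<lambda>n::nat. UNIV \<times> {..real n}) \<subseteq> ?E"
    by auto
  show "(\<Union>n. UNIV \<times> {..real n}) = UNIV"
    by (auto intro: real_arch_simple)
  show "emeasure M (UNIV \<times> {..real n}) \<noteq> \<infinity>" for n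
    using \<open>finite_measure M\<close> by (simp add: finite_measure.emeasure_finite)
  show "X \<in> ?E \<Longrightarrow> emeasure M X = emeasure N X" for X
    using eq by auto
qed

section \<open>Images of the uniform distribution on the unit interval\<close>

instance prod :: (polish_space, polish_space) polish_space ..

abbreviation uniform01 :: "real measure" where
  "uniform01 \<equiv> restrict_space lborel {0<..<1}"

lemma prob_space_uniform01: "prob_space uniform01"
  by (auto simp: emeasure_restrict_space space_restrict_space intro!: prob_spaceI)

lemma measurable_uniform01: "f \<in> borel \<rightarrow>\<^sub>M M \<Longrightarrow> f \<in> uniform01 \<rightarrow>\<^sub>M M"
  by (rule measurable_restrict_space1) simp

lemma emeasure_uniform01_atMost:
  assumes "c \<in> {0..1}"
  shows "emeasure uniform01 ({0<..<1} \<inter> {..c}) = ennreal c"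
proof -
  have "{0<..<1} \<inter> {..c} = (if c < 1 then {0<..c} else {0<..<1::real})"
    using assms by auto
  then have "emeasure lborel ({0<..<1} \<inter> {..c}) = ennreal c"
    using assms by simp
  moreover have "emeasure uniform01 ({0<..<1} \<inter> {..c}) = emeasure lborel ({0<..<1} \<inter> {..c})"
    by (rule emeasure_restrict_space) auto
  ultimately show ?thesis
    by simp
qed

lemma measurable_ident_pair_borel:
  assumes "(\<lambda>x. x) \<in> M \<rightarrow>\<^sub>M borel" "(\<lambda>x. x) \<in> N \<rightarrow>\<^sub>M borel"
  shows "(\<lambda>z. z) \<in> M \<Otimes>\<^sub>M N \<rightarrow>\<^sub>M (borel :: ('a::second_countable_topology \<times> 'b::second_countable_topology) measure)"
  using borel_measurable_Pair[OF measurable_compose[OF measurable_fst assms(1)]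
      measurable_compose[OF measurable_snd assms(2)]]
  by simp

lemma measurable_pair_uniform01:
  fixes f :: "'a::second_countable_topology \<times> real \<Rightarrow> 'b"
  assumes "sets \<mu> = sets borel" "f \<in> borel \<rightarrow>\<^sub>M N"
  shows "f \<in> \<mu> \<Otimes>\<^sub>M uniform01 \<rightarrow>\<^sub>M N"
  by (rule measurable_compose[OF measurable_ident_pair_borel assms(2)])
     (simp_all add: measurable_ident_sets[OF assms(1)] measurable_uniform01)

lemma polish_distr_uniform01:
  fixes P :: "'a::polish_space measure"
  assumes sets_P: "sets P = sets borel" and "prob_space P"
  obtains f :: "real \<Rightarrow> 'a" where "f \<in> borel_measurable borel" "distr uniform01 borel f = P"
proof -
  interpret P: prob_space P by fact
  obtain e :: "'a \<Rightarrow> real" and g where e: "e \<in> borel_measurable borel"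
    and g: "g \<in> borel_measurable borel" and g_e: "\<And>x. g (e x) = x"
    by (metis polish_borel_embedding)
  have e_P: "e \<in> borel_measurable P"
    using e by (subst measurable_cong_sets[OF sets_P refl])
  have "cdf_distribution (distr P borel e)"
    unfolding cdf_distribution_def real_distribution_def real_distribution_axioms_def
    using P.prob_space_distr[OF e_P] by simp
  then interpret C: cdf_distribution "distr P borel e" .
  define J where "J t = (if t \<in> {0<..<1} then C.I t else 0)" for t
  have J: "J \<in> borel_measurable borel"
    using C.measurable_CI unfolding J_def by (subst (asm) measurable_restrict_space_iff) auto
  have "distr uniform01 borel J = distr P borel e"
    by (subst C.distr_I_eq_M[symmetric]) (auto intro!: distr_cong simp: J_def space_restrict_space)
  then have "distr uniform01 borel (g \<circ> J) = distr (distr P borel e) borel g"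
    by (simp add: distr_distr[OF g measurable_uniform01[OF J], symmetric])
  also have "\<dots> = distr P borel (\<lambda>x. x)"
    by (simp add: distr_distr[OF g e_P] comp_def g_e)
  also have "\<dots> = P"
    using sets_P by (simp add: distr_id2)
  finally show thesis
    using that[of "g \<circ> J"] J g by (simp add: measurable_comp)
qed

lemma sample_pair_uniform01:
  fixes \<mu> :: "'a::polish_space measure"
  assumes sets_\<mu>: "sets \<mu> = sets borel" and "prob_space \<mu>"
  obtains T :: "real \<Rightarrow> 'a \<times> real" where "T \<in> borel_measurable borel"
    "\<And>f :: 'a \<times> real \<Rightarrow> 'b. f \<in> borel \<rightarrow>\<^sub>M N \<Longrightarrow>
      distr uniform01 N (f \<circ> T) = distr (\<mu> \<Otimes>\<^sub>M uniform01) N f"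
proof -
  have id_meas: "(\<lambda>z. z) \<in> \<mu> \<Otimes>\<^sub>M uniform01 \<rightarrow>\<^sub>M borel"
    by (rule measurable_pair_uniform01[OF sets_\<mu>]) simp
  have "prob_space (distr (\<mu> \<Otimes>\<^sub>M uniform01) borel (\<lambda>z. z))"
    by (intro prob_space.prob_space_distr prob_space_pair prob_space_uniform01 id_meas \<open>prob_space \<mu>\<close>)
  moreover have "sets (distr (\<mu> \<Otimes>\<^sub>M uniform01) borel (\<lambda>z. z)) = sets borel"
    by simp
  ultimately obtain T :: "real \<Rightarrow> 'a \<times> real" where T_meas: "T \<in> borel_measurable borel"
    and T: "distr uniform01 borel T = distr (\<mu> \<Otimes>\<^sub>M uniform01) borel (\<lambda>z. z)"
    using polish_distr_uniform01 by metis
  show thesis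
  proof (rule that[OF T_meas])
    fix f :: "'a \<times> real \<Rightarrow> 'b" assume "f \<in> borel \<rightarrow>\<^sub>M N"
    then have "distr uniform01 N (f \<circ> T) = distr (distr uniform01 borel T) N f"
      by (rule distr_distr[symmetric, OF _ measurable_uniform01[OF T_meas]])
    also have "\<dots> = distr (distr (\<mu> \<Otimes>\<^sub>M uniform01) borel (\<lambda>z. z)) N f"
      by (simp only: T)
    also have "\<dots> = distr (\<mu> \<Otimes>\<^sub>M uniform01) N f"
      using distr_distr[OF \<open>f \<in> borel \<rightarrow>\<^sub>M N\<close> id_meas] by (simp add: comp_def)
    finally show "distr uniform01 N (f \<circ> T) = distr (\<mu> \<Otimes>\<^sub>M uniform01) N f" .
  qed
qed

section \<open>Distribution functions given on the rationals\<close>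

definition dyadic_above :: "nat \<Rightarrow> real \<Rightarrow> real" where
  "dyadic_above k t = (\<lfloor>t * 2 ^ k\<rfloor> + 1) / 2 ^ k"

lemma dyadic_above_Rats: "dyadic_above k t \<in> \<rat>"
  unfolding dyadic_above_def by (intro Rats_divide Rats_add Rats_of_int Rats_power) auto

lemma less_dyadic_above: "t < dyadic_above k t"
  unfolding dyadic_above_def by (simp add: field_simps) linarith

lemma dyadic_above_le: "dyadic_above k t \<le> t + (1/2) ^ k"
  unfolding dyadic_above_def by (simp add: field_simps power_divide)

lemma dyadic_above_Suc_le: "dyadic_above (Suc k) t \<le> dyadic_above k t"
proof -
  have "\<lfloor>t * 2 ^ Suc k\<rfloor> \<le> 2 * \<lfloor>t * 2 ^ k\<rfloor> + 1"
    by simp linarith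
  then have "real_of_int \<lfloor>t * 2 ^ Suc k\<rfloor> \<le> of_int (2 * \<lfloor>t * 2 ^ k\<rfloor> + 1)"
    by (simp only: of_int_le_iff)
  then have "(\<lfloor>t * 2 ^ Suc k\<rfloor> + 1) / 2 / 2 ^ k \<le> (\<lfloor>t * 2 ^ k\<rfloor> + 1) / (2::real) ^ k"
    by (intro divide_right_mono) auto
  then show ?thesis
    unfolding dyadic_above_def by (simp add: divide_divide_eq_left mult.commute)
qed

lemma eventually_dyadic_above_less:
  assumes "t < q"
  shows "eventually (\<lambda>k. dyadic_above k t < q) sequentially"
proof -
  obtain K where K: "(1/2::real) ^ K < q - t"
    using real_arch_pow_inv[of "q - t" "1/2"] assms by auto
  have "dyadic_above k t < q" if "K \<le> k" for k
  proof -
    have "(1/2::real) ^ k \<le> (1/2) ^ K"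
      using that by (simp add: power_decreasing)
    then show ?thesis
      using dyadic_above_le[of k t] K by linarith
  qed
  then show ?thesis
    unfolding eventually_sequentially by blast
qed

lemma INT_atMost_dyadic_above: "(\<Inter>k. {..dyadic_above k t}) = {..t}"
proof (intro equalityI subsetI)
  fix s assume s: "s \<in> (\<Inter>k. {..dyadic_above k t})"
  show "s \<in> {..t}"
  proof (rule ccontr)
    assume "s \<notin> {..t}"
    then obtain k where "dyadic_above k t < s"
      using eventually_dyadic_above_less[of t s] by (metis atMost_iff eventually_sequentially not_le order_refl)
    moreover have "s \<le> dyadic_above k t"
      using s by blast
    ultimately show False
      by simp
  qed
qed (auto intro: less_imp_le less_dyadic_above order_trans)

lemma Rats_greater_ne: "{q\<in>\<rat>. (t::real) < q} \<noteq> {}"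
  using Rats_dense_in_real[of t "t + 1"] by auto

locale rat_cdf =
  fixes F :: "real \<Rightarrow> real"
  assumes mono: "\<And>q q'. q \<in> \<rat> \<Longrightarrow> q' \<in> \<rat> \<Longrightarrow> q \<le> q' \<Longrightarrow> F q \<le> F q'"
    and zero: "\<And>q. q \<in> \<rat> \<Longrightarrow> q < 0 \<Longrightarrow> F q = 0"
    and one: "\<And>q. q \<in> \<rat> \<Longrightarrow> 1 \<le> q \<Longrightarrow> F q = 1"
begin

definition right_lim :: "real \<Rightarrow> real" where
  "right_lim t = (INF q\<in>{q\<in>\<rat>. t < q}. F q)"

lemma nonneg: "q \<in> \<rat> \<Longrightarrow> 0 \<le> F q"
  using zero[of "-1"] mono[of "-1" q] zero[of q] by (cases "q < 0") auto

lemma bdd_below_greater: "bdd_below (F ` {q\<in>\<rat>. t < q})"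
  by (rule bdd_belowI[of _ 0]) (auto intro: nonneg)

lemma right_lim_le: "q \<in> \<rat> \<Longrightarrow> t < q \<Longrightarrow> right_lim t \<le> F q"
  unfolding right_lim_def by (rule cINF_lower[OF bdd_below_greater]) auto

lemma right_lim_greatest: "(\<And>q. q \<in> \<rat> \<Longrightarrow> t < q \<Longrightarrow> c \<le> F q) \<Longrightarrow> c \<le> right_lim t"
  unfolding right_lim_def by (rule cINF_greatest[OF Rats_greater_ne]) auto

lemma right_lim_approx:
  assumes "right_lim t < c"
  obtains q where "q \<in> \<rat>" "t < q" "F q < c"
  using assms unfolding right_lim_def cINF_less_iff[OF Rats_greater_ne bdd_below_greater] by auto

lemma right_lim_nonneg: "0 \<le> right_lim t"
  by (rule right_lim_greatest) (rule nonneg)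

lemma right_lim_le_1: "right_lim t \<le> 1"
proof -
  obtain q where "q \<in> \<rat>" "max t 1 < q"
    using Rats_dense_in_real[of "max t 1" "max t 1 + 1"] by auto
  then show ?thesis
    using right_lim_le[of q t] one[of q] by simp
qed

lemma right_lim_eq_0: "t < 0 \<Longrightarrow> right_lim t = 0"
  using Rats_dense_in_real[of t 0] right_lim_le zero right_lim_nonneg by (metis order.antisym)

lemma right_lim_eq_1: "1 \<le> t \<Longrightarrow> right_lim t = 1"
  using right_lim_greatest[of t 1] one right_lim_le_1 by (simp add: order.antisym)

lemma right_continuous_mono_right_lim: "right_continuous_mono right_lim 0 1"
proof
  show mono: "mono right_lim"
    by (rule monoI) (rule right_lim_greatest, auto intro: right_lim_le)
  show "continuous (at_right t) right_lim" for t
  proof (subst continuous_at_right_real_increasing)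
    show "right_lim x \<le> right_lim y" if "x \<le> y" for x y
      using mono that by (rule monoD)
    show "\<forall>\<epsilon>>0. \<exists>\<delta>>0. right_lim (t + \<delta>) - right_lim t < \<epsilon>"
    proof (intro allI impI)
      fix \<epsilon> :: real assume "\<epsilon> > 0"
      then obtain q where q: "q \<in> \<rat>" "t < q" "F q < right_lim t + \<epsilon>"
        using right_lim_approx[of t "right_lim t + \<epsilon>"] by auto
      then have "right_lim (t + (q - t) / 2) \<le> F q"
        by (intro right_lim_le) (auto simp: field_simps)
      then show "\<exists>\<delta>>0. right_lim (t + \<delta>) - right_lim t < \<epsilon>"
        using q by (intro exI[of _ "(q - t) / 2"]) auto
    qed
  qed
  show "(right_lim \<longlongrightarrow> 0) at_bot"
    by (rule tendsto_eventually) (auto simp: eventually_at_bot_linorder intro!: exI[of _ "-1"] right_lim_eq_0)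
  show "(right_lim \<longlongrightarrow> 1) at_top"
    by (rule tendsto_eventually) (auto simp: eventually_at_top_linorder intro!: exI[of _ 1] right_lim_eq_1)
qed

lemma tendsto_right_lim: "(\<lambda>k. F (dyadic_above k t)) \<longlonglongrightarrow> right_lim t"
proof (rule order_tendstoI)
  fix c assume "c < right_lim t"
  then show "\<forall>\<^sub>F k in sequentially. c < F (dyadic_above k t)"
    by (intro always_eventually allI less_le_trans[OF _ right_lim_le[OF dyadic_above_Rats less_dyadic_above]])
next
  fix c assume "right_lim t < c"
  then obtain q where q: "q \<in> \<rat>" "t < q" "F q < c"
    by (rule right_lim_approx)
  show "\<forall>\<^sub>F k in sequentially. F (dyadic_above k t) < c"
    using eventually_dyadic_above_less[OF q(2)]
  proof eventually_elim
    case (elim k)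
    then show ?case
      using mono[OF dyadic_above_Rats q(1), of k t] q(3) by linarith
  qed
qed

end

lemma rat_cdf_enn2real:
  fixes \<phi> :: "real \<Rightarrow> ennreal"
  assumes mono: "\<forall>q\<in>\<rat>. \<forall>q'\<in>\<rat>. q \<le> q' \<longrightarrow> \<phi> q \<le> \<phi> q'"
    and zero: "\<forall>q\<in>\<rat>. q < 0 \<longrightarrow> \<phi> q = 0" and one: "\<forall>q\<in>\<rat>. 1 \<le> q \<longrightarrow> \<phi> q = 1"
  shows "rat_cdf (\<lambda>q. enn2real (\<phi> q))" and "q \<in> \<rat> \<Longrightarrow> \<phi> q \<noteq> \<infinity>"
proof -
  have finite: "\<phi> q \<noteq> \<infinity>" if "q \<in> \<rat>" for q
  proof -
    have "max q 1 \<in> \<rat>"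
      using that by (simp add: max_def)
    then have "\<phi> q \<le> 1"
      using that mono one by (metis max.cobounded1 max.cobounded2)
    then show ?thesis
      by (auto simp: top_unique)
  qed
  then show "q \<in> \<rat> \<Longrightarrow> \<phi> q \<noteq> \<infinity>" .
  show "rat_cdf (\<lambda>q. enn2real (\<phi> q))"
    by unfold_locales (use mono zero one finite in \<open>auto simp: less_top intro!: enn2real_mono\<close>)
qed

section \<open>Disintegration along a real coordinate\<close>

lemma exists_density_Times:
  fixes \<gamma> :: "('a::second_countable_topology \<times> 'b::second_countable_topology) measure"
  assumes sets_\<gamma>: "sets \<gamma> = sets borel" and "finite_measure \<gamma>"
    and marg: "distr \<gamma> borel fst = \<mu>" and B: "B \<in> sets borel"
  obtains \<phi> where "\<phi> \<in> borel_measurable borel"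
    "\<And>A. A \<in> sets borel \<Longrightarrow> (\<integral>\<^sup>+x. \<phi> x * indicator A x \<partial>\<mu>) = emeasure \<gamma> (A \<times> B)"
proof -
  interpret \<gamma>: finite_measure \<gamma> by fact
  have [measurable]: "fst \<in> \<gamma> \<rightarrow>\<^sub>M borel"
    by (subst measurable_cong_sets[OF sets_\<gamma> refl]) simp
  have sets_\<mu>: "sets \<mu> = sets borel"
    using marg by auto
  interpret \<mu>: finite_measure \<mu>
    unfolding marg[symmetric] by (rule \<gamma>.finite_measure_distr) simp
  have space_\<gamma>: "space \<gamma> = UNIV"
    using sets_eq_imp_space_eq[OF sets_\<gamma>] by simp
  have Times_in_\<gamma>: "A \<times> B \<in> sets \<gamma>" if "A \<in> sets borel" "B \<in> sets borel" for A B
    using that sets_\<gamma> by (simp add: Times_in_sets_borel)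
  have \<mu>_eq: "emeasure \<mu> A = emeasure \<gamma> (A \<times> UNIV)" if "A \<in> sets borel" for A
    using emeasure_distr_fst_borel[OF sets_\<gamma> that] by (simp add: marg)
  define \<nu> where "\<nu> = distr (density \<gamma> (indicator (UNIV \<times> B))) borel fst"
  have \<nu>: "emeasure \<nu> A = emeasure \<gamma> (A \<times> B)" if "A \<in> sets borel" for A
  proof -
    have "emeasure \<nu> A = emeasure \<gamma> ((UNIV \<times> B) \<inter> (fst -` A \<inter> space \<gamma>))"
      unfolding \<nu>_def using that B Times_in_\<gamma>[of UNIV B]
      by (simp add: emeasure_distr emeasure_restricted)
    also have "(UNIV \<times> B) \<inter> (fst -` A \<inter> space \<gamma>) = A \<times> B"
      using space_\<gamma> by auto
    finally show ?thesis .
  qed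
  have "absolutely_continuous \<mu> \<nu>"
    unfolding absolutely_continuous_def
  proof
    fix A assume "A \<in> null_sets \<mu>"
    then have A: "A \<in> sets borel" "emeasure \<gamma> (A \<times> UNIV) = 0"
      using sets_\<mu> \<mu>_eq[of A] by (auto simp: null_sets_def)
    have "emeasure \<nu> A \<le> emeasure \<gamma> (A \<times> UNIV)"
      unfolding \<nu>[OF A(1)] by (intro emeasure_mono Times_in_\<gamma> A) auto
    then show "A \<in> null_sets \<nu>"
      using A by (simp add: \<nu>_def null_sets_def)
  qed
  moreover have "sets \<nu> = sets \<mu>"
    unfolding \<nu>_def sets_\<mu> by simp
  ultimately have "density \<mu> (RN_deriv \<mu> \<nu>) = \<nu>"
    by (rule \<mu>.density_RN_deriv)
  then have "(\<integral>\<^sup>+x. RN_deriv \<mu> \<nu> x * indicator A x \<partial>\<mu>) = emeasure \<gamma> (A \<times> B)" if "A \<in> sets borel" for A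
    using that \<nu>[OF that] sets_\<mu> by (metis emeasure_density borel_measurable_RN_deriv)
  moreover have "RN_deriv \<mu> \<nu> \<in> borel_measurable borel"
    using borel_measurable_RN_deriv[of \<mu> \<nu>] by (simp add: measurable_cong_sets[OF sets_\<mu> refl])
  ultimately show thesis
    using that by blast
qed

lemma AE_le_of_set_nn_integral_le:
  fixes f g :: "'a \<Rightarrow> ennreal"
  assumes [measurable]: "f \<in> borel_measurable M" "g \<in> borel_measurable M"
    and finite: "integral\<^sup>N M g \<noteq> \<infinity>"
    and le: "\<And>A. A \<in> sets M \<Longrightarrow> (\<integral>\<^sup>+x. f x * indicator A x \<partial>M) \<le> (\<integral>\<^sup>+x. g x * indicator A x \<partial>M)"
  shows "AE x in M. f x \<le> g x"
proof (rule ccontr)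
  define N where "N = {x\<in>space M. g x < f x}"
  have [measurable]: "N \<in> sets M"
    unfolding N_def by measurable
  assume "\<not> (AE x in M. f x \<le> g x)"
  moreover have "AE x in M. f x \<le> g x" if "AE x in M. f x * indicator N x \<le> g x * indicator N x"
    using that AE_space
  proof eventually_elim
    case (elim x)
    then show ?case
      by (cases "g x < f x") (auto simp: N_def not_less)
  qed
  ultimately have "\<not> (AE x in M. f x * indicator N x \<le> g x * indicator N x)"
    by blast
  moreover have "AE x in M. g x * indicator N x \<le> f x * indicator N x"
    by (auto simp: N_def split: split_indicator)
  moreover have "(\<integral>\<^sup>+x. g x * indicator N x \<partial>M) \<le> integral\<^sup>N M g"
    by (intro nn_integral_mono) (simp split: split_indicator)
  then have "(\<integral>\<^sup>+x. g x * indicator N x \<partial>M) \<noteq> \<infinity>"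
    using finite by (auto simp: top_unique)
  ultimately have "(\<integral>\<^sup>+x. g x * indicator N x \<partial>M) < (\<integral>\<^sup>+x. f x * indicator N x \<partial>M)"
    by (intro nn_integral_less) auto
  then show False
    using le[of N] by simp
qed

lemma AE_rat_cdf_densities:
  fixes \<gamma> :: "('a::second_countable_topology \<times> real) measure"
  assumes sets_\<gamma>: "sets \<gamma> = sets borel" and "finite_measure \<gamma>"
    and marg: "distr \<gamma> borel fst = \<mu>" and concentrated: "AE z in \<gamma>. snd z \<in> {0..1}"
    and \<phi>_meas: "\<And>q. \<phi> q \<in> borel_measurable borel"
    and \<phi>: "\<And>q A. A \<in> sets borel \<Longrightarrow> (\<integral>\<^sup>+x. \<phi> q x * indicator A x \<partial>\<mu>) = emeasure \<gamma> (A \<times> {..q})"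
  shows "AE x in \<mu>. (\<forall>q\<in>\<rat>. \<forall>q'\<in>\<rat>. q \<le> q' \<longrightarrow> \<phi> q x \<le> \<phi> q' x)
    \<and> (\<forall>q\<in>\<rat>. q < 0 \<longrightarrow> \<phi> q x = 0) \<and> (\<forall>q\<in>\<rat>. 1 \<le> q \<longrightarrow> \<phi> q x = 1)"
proof -
  interpret \<gamma>: finite_measure \<gamma> by fact
  have sets_\<mu>: "sets \<mu> = sets borel"
    using marg by auto
  have Times_in_\<gamma>: "A \<times> B \<in> sets \<gamma>" if "A \<in> sets borel" "B \<in> sets borel" for A B
    using that sets_\<gamma> by (simp add: Times_in_sets_borel)
  have finite: "integral\<^sup>N \<mu> (\<phi> q) \<noteq> \<infinity>" for q
    using \<phi>[of UNIV q] by (simp add: \<gamma>.emeasure_real)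
  interpret \<mu>: finite_measure \<mu>
    unfolding marg[symmetric] by (rule \<gamma>.finite_measure_distr) (simp add: measurable_cong_sets[OF sets_\<gamma>])
  have \<mu>_eq: "emeasure \<mu> A = emeasure \<gamma> (A \<times> UNIV)" if "A \<in> sets borel" for A
    using emeasure_distr_fst_borel[OF sets_\<gamma> that] by (simp add: marg)
  have AE_le: "AE x in \<mu>. f x \<le> g x"
    if "f \<in> borel_measurable borel" "g \<in> borel_measurable borel" "integral\<^sup>N \<mu> g \<noteq> \<infinity>"
      "\<And>A. A \<in> sets borel \<Longrightarrow> (\<integral>\<^sup>+x. f x * indicator A x \<partial>\<mu>) \<le> (\<integral>\<^sup>+x. g x * indicator A x \<partial>\<mu>)"
    for f g :: "'a \<Rightarrow> ennreal"
    using that by (intro AE_le_of_set_nn_integral_le) (simp_all add: measurable_cong_sets[OF sets_\<mu> refl] sets_\<mu>)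
  have mono: "AE x in \<mu>. \<phi> q x \<le> \<phi> q' x" if "q \<le> q'" for q q'
    using that by (intro AE_le \<phi>_meas finite) (auto simp: \<phi> intro!: emeasure_mono Times_in_\<gamma>)
  have zero: "AE x in \<mu>. \<phi> q x \<le> 0" if "q < 0" for q
  proof (intro AE_le \<phi>_meas)
    fix A :: "'a set" assume "A \<in> sets borel"
    then have "emeasure \<gamma> (A \<times> {..q}) = emeasure \<gamma> {}"
      using concentrated that by (intro emeasure_eq_AE) (auto intro: Times_in_\<gamma>)
    then show "(\<integral>\<^sup>+x. \<phi> q x * indicator A x \<partial>\<mu>) \<le> (\<integral>\<^sup>+x. 0 * indicator A x \<partial>\<mu>)"
      using \<phi>[OF \<open>A \<in> sets borel\<close>] by simp
  qed simp_all
  have le_one: "AE x in \<mu>. \<phi> q x \<le> 1" for q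
    by (intro AE_le \<phi>_meas) (auto simp: \<phi> \<mu>_eq sets_\<mu> \<mu>.emeasure_real intro!: emeasure_mono Times_in_\<gamma>)
  have ge_one: "AE x in \<mu>. 1 \<le> \<phi> q x" if "1 \<le> q" for q
  proof (intro AE_le \<phi>_meas finite)
    fix A :: "'a set" assume "A \<in> sets borel"
    then have "emeasure \<gamma> (A \<times> UNIV) = emeasure \<gamma> (A \<times> {..q})"
      using concentrated that by (intro emeasure_eq_AE) (auto intro: Times_in_\<gamma>)
    then show "(\<integral>\<^sup>+x. 1 * indicator A x \<partial>\<mu>) \<le> (\<integral>\<^sup>+x. \<phi> q x * indicator A x \<partial>\<mu>)"
      using \<phi>[OF \<open>A \<in> sets borel\<close>] \<mu>_eq[OF \<open>A \<in> sets borel\<close>] \<open>A \<in> sets borel\<close>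
      by (simp add: sets_\<mu>)
  qed simp
  have "AE x in \<mu>. \<forall>q\<in>\<rat>. \<forall>q'\<in>\<rat>. q \<le> q' \<longrightarrow> \<phi> q x \<le> \<phi> q' x"
    using mono by (simp add: AE_ball_countable countable_rat)
  moreover have "AE x in \<mu>. \<forall>q\<in>\<rat>. q < 0 \<longrightarrow> \<phi> q x \<le> 0"
    using zero by (simp add: AE_ball_countable countable_rat)
  moreover have "AE x in \<mu>. \<forall>q\<in>\<rat>. \<phi> q x \<le> 1"
    using le_one by (simp add: AE_ball_countable countable_rat)
  moreover have "AE x in \<mu>. \<forall>q\<in>\<rat>. 1 \<le> q \<longrightarrow> 1 \<le> \<phi> q x"
    using ge_one by (simp add: AE_ball_countable countable_rat)
  ultimately show ?thesis
    by eventually_elim (auto intro: order.antisym)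
qed

lemma exists_rat_conditional_cdf:
  fixes \<gamma> :: "('a::second_countable_topology \<times> real) measure"
  assumes sets_\<gamma>: "sets \<gamma> = sets borel" and "finite_measure \<gamma>"
    and marg: "distr \<gamma> borel fst = \<mu>" and "AE z in \<gamma>. snd z \<in> {0..1}"
  obtains F :: "real \<Rightarrow> 'a \<Rightarrow> real"
  where "\<And>q. F q \<in> borel_measurable borel" "\<And>x. rat_cdf (\<lambda>q. F q x)"
    "\<And>q A. q \<in> \<rat> \<Longrightarrow> A \<in> sets borel \<Longrightarrow>
      (\<integral>\<^sup>+x. ennreal (F q x) * indicator A x \<partial>\<mu>) = emeasure \<gamma> (A \<times> {..q})"
proof -
  have "\<forall>q. \<exists>\<phi>. \<phi> \<in> borel_measurable borel \<and>
      (\<forall>A\<in>sets borel. (\<integral>\<^sup>+x. \<phi> x * indicator A x \<partial>\<mu>) = emeasure \<gamma> (A \<times> {..q}))"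
    by (metis exists_density_Times[OF sets_\<gamma> \<open>finite_measure \<gamma>\<close> marg] atMost_borel)
  then obtain \<phi> where \<phi>_meas: "\<And>q. \<phi> q \<in> borel_measurable borel"
    and \<phi>: "\<And>q A. A \<in> sets borel \<Longrightarrow> (\<integral>\<^sup>+x. \<phi> q x * indicator A x \<partial>\<mu>) = emeasure \<gamma> (A \<times> {..q})"
    by metis
  define good where "good x \<longleftrightarrow> (\<forall>q\<in>\<rat>. \<forall>q'\<in>\<rat>. q \<le> q' \<longrightarrow> \<phi> q x \<le> \<phi> q' x)
    \<and> (\<forall>q\<in>\<rat>. q < 0 \<longrightarrow> \<phi> q x = 0) \<and> (\<forall>q\<in>\<rat>. 1 \<le> q \<longrightarrow> \<phi> q x = 1)" for x
  have AE_good: "AE x in \<mu>. good x"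
    unfolding good_def by (rule AE_rat_cdf_densities[OF assms \<phi>_meas \<phi>])
  have [measurable]: "Measurable.pred borel good"
    using \<phi>_meas unfolding good_def by (measurable; simp add: countable_rat)
  have good_cdf: "rat_cdf (\<lambda>q. enn2real (\<phi> q x))" if "good x" for x
    using rat_cdf_enn2real(1)[of "\<lambda>q. \<phi> q x"] that unfolding good_def by blast
  have good_finite: "\<phi> q x \<noteq> \<infinity>" if "good x" "q \<in> \<rat>" for q x
    using rat_cdf_enn2real(2)[of "\<lambda>q. \<phi> q x"] that unfolding good_def by blast
  \<comment> \<open>On the \<open>\<mu>\<close>-null set of bad points use the distribution function of the unit mass at 0.\<close>
  define F where "F q x = (if good x then enn2real (\<phi> q x) else of_bool (0 \<le> q))" for q x
  show thesis
  proof
    show "F q \<in> borel_measurable borel" for q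
      using \<phi>_meas unfolding F_def by measurable
    show "rat_cdf (\<lambda>q. F q x)" for x
    proof (cases "good x")
      case True
      then show ?thesis
        using good_cdf[OF True] by (simp add: F_def)
    qed (unfold_locales, auto simp: F_def)
    show "(\<integral>\<^sup>+x. ennreal (F q x) * indicator A x \<partial>\<mu>) = emeasure \<gamma> (A \<times> {..q})"
      if "q \<in> \<rat>" "A \<in> sets borel" for q A
    proof -
      have "AE x in \<mu>. ennreal (F q x) * indicator A x = \<phi> q x * indicator A x"
        using AE_good
      proof eventually_elim
        case (elim x)
        then show ?case
          using good_finite[OF elim \<open>q \<in> \<rat>\<close>] by (simp add: F_def ennreal_enn2real_if)
      qed
      then have "(\<integral>\<^sup>+x. ennreal (F q x) * indicator A x \<partial>\<mu>) = (\<integral>\<^sup>+x. \<phi> q x * indicator A x \<partial>\<mu>)"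
        by (rule nn_integral_cong_AE)
      also have "\<dots> = emeasure \<gamma> (A \<times> {..q})"
        by (rule \<phi>[OF \<open>A \<in> sets borel\<close>])
      finally show ?thesis .
    qed
  qed
qed

lemma set_nn_integral_right_lim:
  fixes \<gamma> :: "('a::second_countable_topology \<times> real) measure" and F :: "real \<Rightarrow> 'a \<Rightarrow> real"
  assumes sets_\<gamma>: "sets \<gamma> = sets borel" and "finite_measure \<gamma>" and sets_\<mu>: "sets \<mu> = sets borel"
    and [measurable]: "\<And>q. F q \<in> borel_measurable borel"
    and F_cdf: "\<And>x. rat_cdf (\<lambda>q. F q x)"
    and F: "\<And>q A. q \<in> \<rat> \<Longrightarrow> A \<in> sets borel \<Longrightarrow>
      (\<integral>\<^sup>+x. ennreal (F q x) * indicator A x \<partial>\<mu>) = emeasure \<gamma> (A \<times> {..q})"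
    and [measurable]: "A \<in> sets borel"
  shows "(\<integral>\<^sup>+x. ennreal (rat_cdf.right_lim (\<lambda>q. F q x) t) * indicator A x \<partial>\<mu>) = emeasure \<gamma> (A \<times> {..t})"
proof -
  interpret \<gamma>: finite_measure \<gamma> by fact
  define h where "h k x = ennreal (F (dyadic_above k t) x) * indicator A x" for k x
  have h_dec: "decseq (\<lambda>k. h k x)" for x
    unfolding h_def using rat_cdf.mono[OF F_cdf dyadic_above_Rats dyadic_above_Rats dyadic_above_Suc_le]
    by (intro decseq_SucI) (auto intro!: mult_right_mono ennreal_leI)
  have "(INF k. h k x) = ennreal (rat_cdf.right_lim (\<lambda>q. F q x) t) * indicator A x" for x
    using rat_cdf.tendsto_right_lim[OF F_cdf, of t]
    by (intro LIMSEQ_unique[OF LIMSEQ_INF[OF h_dec]])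
       (auto simp: h_def intro: tendsto_ennrealI split: split_indicator)
  moreover have h_int: "integral\<^sup>N \<mu> (h k) = emeasure \<gamma> (A \<times> {..dyadic_above k t})" for k
    unfolding h_def by (simp add: F dyadic_above_Rats)
  moreover have "h k \<in> borel_measurable \<mu>" for k
    unfolding h_def by (subst measurable_cong_sets[OF sets_\<mu> refl]) measurable
  moreover have "decseq h"
    using h_dec by (intro decseq_SucI le_funI) (simp add: decseq_Suc_iff)
  ultimately have "(\<integral>\<^sup>+x. ennreal (rat_cdf.right_lim (\<lambda>q. F q x) t) * indicator A x \<partial>\<mu>) =
      (INF k. integral\<^sup>N \<mu> (h k))"
    by (subst nn_integral_monotone_convergence_INF_decseq[symmetric])
       (auto simp: less_top[symmetric] \<gamma>.emeasure_finite)
  also have "\<dots> = (INF k. emeasure \<gamma> (A \<times> {..dyadic_above k t}))"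
    by (simp add: h_int)
  also have "\<dots> = emeasure \<gamma> (\<Inter>k. A \<times> {..dyadic_above k t})"
    using dyadic_above_Suc_le sets_\<gamma>
    by (intro INF_emeasure_decseq) (auto simp: decseq_Suc_iff Times_in_sets_borel intro: order_trans)
  also have "(\<Inter>k. A \<times> {..dyadic_above k t}) = A \<times> {..t}"
    using INT_atMost_dyadic_above[of t] by auto
  finally show ?thesis .
qed

lemma exists_conditional_cdf:
  fixes \<gamma> :: "('a::second_countable_topology \<times> real) measure"
  assumes sets_\<gamma>: "sets \<gamma> = sets borel" and "finite_measure \<gamma>"
    and marg: "distr \<gamma> borel fst = \<mu>" and "AE z in \<gamma>. snd z \<in> {0..1}"
  obtains G :: "real \<Rightarrow> 'a \<Rightarrow> real"
  where "\<And>t. G t \<in> borel_measurable borel" "\<And>x. right_continuous_mono (\<lambda>t. G t x) 0 1"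
    "\<And>t x. G t x \<in> {0..1}"
    "\<And>t A. A \<in> sets borel \<Longrightarrow>
      (\<integral>\<^sup>+x. ennreal (G t x) * indicator A x \<partial>\<mu>) = emeasure \<gamma> (A \<times> {..t})"
proof -
  obtain F where F_meas[measurable]: "\<And>q. F q \<in> borel_measurable borel"
    and F_cdf: "\<And>x. rat_cdf (\<lambda>q. F q x)"
    and F: "\<And>q A. q \<in> \<rat> \<Longrightarrow> A \<in> sets borel \<Longrightarrow>
      (\<integral>\<^sup>+x. ennreal (F q x) * indicator A x \<partial>\<mu>) = emeasure \<gamma> (A \<times> {..q})"
    by (erule exists_rat_conditional_cdf[OF assms])
  have sets_\<mu>: "sets \<mu> = sets borel"
    using marg by auto
  show thesis
  proof
    show "(\<lambda>x. rat_cdf.right_lim (\<lambda>q. F q x) t) \<in> borel_measurable borel" for t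
      by (rule borel_measurable_LIMSEQ_real[OF rat_cdf.tendsto_right_lim[OF F_cdf]]) simp
    show "right_continuous_mono (\<lambda>t. rat_cdf.right_lim (\<lambda>q. F q x) t) 0 1" for x
      by (rule rat_cdf.right_continuous_mono_right_lim[OF F_cdf])
    show "rat_cdf.right_lim (\<lambda>q. F q x) t \<in> {0..1}" for t x
      using rat_cdf.right_lim_nonneg[OF F_cdf] rat_cdf.right_lim_le_1[OF F_cdf] by auto
    show "(\<integral>\<^sup>+x. ennreal (rat_cdf.right_lim (\<lambda>q. F q x) t) * indicator A x \<partial>\<mu>) = emeasure \<gamma> (A \<times> {..t})"
      if "A \<in> sets borel" for t A
      by (rule set_nn_integral_right_lim[OF sets_\<gamma> \<open>finite_measure \<gamma>\<close> sets_\<mu> F_meas F_cdf F that])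
  qed
qed

lemma distr_conditional_quantile:
  fixes \<gamma> :: "('a::second_countable_topology \<times> real) measure" and G :: "real \<Rightarrow> 'a \<Rightarrow> real"
  assumes sets_\<gamma>: "sets \<gamma> = sets borel" and "finite_measure \<gamma>" and sets_\<mu>: "sets \<mu> = sets borel"
    and [measurable]: "\<And>t. G t \<in> borel_measurable borel"
    and G_rcm: "\<And>x. right_continuous_mono (\<lambda>t. G t x) 0 1"
    and G_01: "\<And>t x. G t x \<in> {0..1}"
    and G: "\<And>t A. A \<in> sets borel \<Longrightarrow>
      (\<integral>\<^sup>+x. ennreal (G t x) * indicator A x \<partial>\<mu>) = emeasure \<gamma> (A \<times> {..t})"
  defines "S x v \<equiv> if v \<in> {0<..<1} then Inf {s. v \<le> G s x} else 0"
  shows "case_prod S \<in> borel_measurable borel"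
    and "distr (\<mu> \<Otimes>\<^sub>M uniform01) borel (\<lambda>(x, v). (x, S x v)) = \<gamma>"
proof -
  interpret U: prob_space uniform01
    by (rule prob_space_uniform01)
  have quantile: "S x v \<le> s \<longleftrightarrow> v \<le> G s x" if "v \<in> {0<..<1}" for x v s
    using right_continuous_mono.pseudoinverse[OF G_rcm[of x], of v s] that by (simp add: S_def)
  have S_le_iff: "S x v \<le> a \<longleftrightarrow> v \<in> {0<..<1} \<and> v \<le> G a x \<or> v \<notin> {0<..<1} \<and> 0 \<le> a" for x v a
  proof (cases "v \<in> {0<..<1}")
    case True
    then show ?thesis by (simp add: quantile)
  next
    case False
    then show ?thesis by (auto simp: S_def)
  qed
  have "{z \<in> space borel. case_prod S z \<le> a} =
      {z \<in> space borel. snd z \<in> {0<..<1} \<and> snd z \<le> G a (fst z) \<or> snd z \<notin> {0<..<1} \<and> 0 \<le> a}" for a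
    by (simp add: case_prod_beta S_le_iff)
  then show S_meas[measurable]: "case_prod S \<in> borel_measurable borel"
    by (subst borel_measurable_iff_le) simp
  define \<Psi> where "\<Psi> = (\<lambda>(x, v). (x, S x v))"
  have "\<Psi> \<in> borel_measurable borel"
    using S_meas by (simp add: \<Psi>_def case_prod_beta')
  then have \<Psi>_meas: "\<Psi> \<in> \<mu> \<Otimes>\<^sub>M uniform01 \<rightarrow>\<^sub>M borel"
    by (rule measurable_pair_uniform01[OF sets_\<mu>])
  have "\<gamma> = distr (\<mu> \<Otimes>\<^sub>M uniform01) borel \<Psi>"
  proof (rule measure_eqI_Times_atMost[OF sets_\<gamma> _ \<open>finite_measure \<gamma>\<close>])
    fix A :: "'a set" and t assume A: "A \<in> sets borel"
    have slice: "Pair x -` (\<Psi> -` (A \<times> {..t}) \<inter> space (\<mu> \<Otimes>\<^sub>M uniform01)) =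
        (if x \<in> A then {0<..<1} \<inter> {..G t x} else {})" for x
      using sets_eq_imp_space_eq[OF sets_\<mu>]
      by (auto simp: \<Psi>_def space_pair_measure space_restrict_space quantile)
    have "emeasure (distr (\<mu> \<Otimes>\<^sub>M uniform01) borel \<Psi>) (A \<times> {..t}) =
        (\<integral>\<^sup>+x. emeasure uniform01 (Pair x -` (\<Psi> -` (A \<times> {..t}) \<inter> space (\<mu> \<Otimes>\<^sub>M uniform01))) \<partial>\<mu>)"
      using A \<Psi>_meas
      by (simp add: emeasure_distr Times_in_sets_borel U.emeasure_pair_measure_alt measurable_sets)
    also have "\<dots> = (\<integral>\<^sup>+x. ennreal (G t x) * indicator A x \<partial>\<mu>)"
      unfolding slice using emeasure_uniform01_atMost[OF G_01] by (intro nn_integral_cong) simp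
    finally show "emeasure \<gamma> (A \<times> {..t}) = emeasure (distr (\<mu> \<Otimes>\<^sub>M uniform01) borel \<Psi>) (A \<times> {..t})"
      using G[OF A] by simp
  qed simp
  then show "distr (\<mu> \<Otimes>\<^sub>M uniform01) borel (\<lambda>(x, v). (x, S x v)) = \<gamma>"
    by (simp add: \<Psi>_def)
qed

lemma disintegration_unit_interval:
  fixes \<gamma> :: "('a::second_countable_topology \<times> real) measure"
  assumes sets_\<gamma>: "sets \<gamma> = sets borel" and "finite_measure \<gamma>"
    and marg: "distr \<gamma> borel fst = \<mu>" and "AE z in \<gamma>. snd z \<in> {0..1}"
  obtains S :: "'a \<Rightarrow> real \<Rightarrow> real"
  where "case_prod S \<in> borel_measurable borel"
    "distr (\<mu> \<Otimes>\<^sub>M uniform01) borel (\<lambda>(x, v). (x, S x v)) = \<gamma>"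
proof -
  obtain G :: "real \<Rightarrow> 'a \<Rightarrow> real" where G_meas: "\<And>t. G t \<in> borel_measurable borel"
    and G_rcm: "\<And>x. right_continuous_mono (\<lambda>t. G t x) 0 1" and G_01: "\<And>t x. G t x \<in> {0..1}"
    and G: "\<And>t A. A \<in> sets borel \<Longrightarrow>
      (\<integral>\<^sup>+x. ennreal (G t x) * indicator A x \<partial>\<mu>) = emeasure \<gamma> (A \<times> {..t})"
    by (erule exists_conditional_cdf[OF assms])
  have sets_\<mu>: "sets \<mu> = sets borel"
    using marg by auto
  show thesis
    by (rule that[OF distr_conditional_quantile[OF sets_\<gamma> \<open>finite_measure \<gamma>\<close> sets_\<mu> G_meas G_rcm G_01 G]])
qed

lemma polish_disintegration:
  fixes \<gamma> :: "('a::second_countable_topology \<times> 'b::polish_space) measure"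
  assumes sets_\<gamma>: "sets \<gamma> = sets borel" and "finite_measure \<gamma>" and marg: "distr \<gamma> borel fst = \<mu>"
  shows "\<exists>S :: 'a \<Rightarrow> real \<Rightarrow> 'b. case_prod S \<in> borel_measurable borel \<and>
    distr (\<mu> \<Otimes>\<^sub>M uniform01) borel (\<lambda>(x, v). (x, S x v)) = \<gamma>"
proof -
  interpret \<gamma>: finite_measure \<gamma> by fact
  obtain e :: "'b \<Rightarrow> real" and g where [measurable]: "e \<in> borel_measurable borel" "g \<in> borel_measurable borel"
    and g_e: "\<And>y. g (e y) = y" and e_01: "\<And>y. e y \<in> {0..1}"
    by (erule polish_borel_embedding)
  have sets_\<mu>: "sets \<mu> = sets borel"
    using marg by auto
  define E where "E = (\<lambda>(x :: 'a, y). (x, e y))"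
  have E_meas: "E \<in> \<gamma> \<rightarrow>\<^sub>M borel"
    unfolding E_def measurable_cong_sets[OF sets_\<gamma> refl] by (simp add: case_prod_beta')
  obtain S where S_meas: "case_prod S \<in> borel_measurable borel"
    and S: "distr (\<mu> \<Otimes>\<^sub>M uniform01) borel (\<lambda>(x, v). (x, S x v)) = distr \<gamma> borel E"
  proof (rule disintegration_unit_interval)
    show "finite_measure (distr \<gamma> borel E)"
      using E_meas by (rule \<gamma>.finite_measure_distr)
    show "distr (distr \<gamma> borel E) borel fst = \<mu>"
      using E_meas by (simp add: distr_distr comp_def E_def case_prod_beta' marg)
    show "AE z in distr \<gamma> borel E. snd z \<in> {0..1}"
      using E_meas e_01 by (subst AE_distr_iff) (auto simp: E_def)
  qed auto
  show ?thesis
  proof (intro exI conjI)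
    show "(\<lambda>(x, v). g (S x v)) \<in> borel_measurable borel"
      using S_meas by (simp add: case_prod_beta')
    have "distr (\<mu> \<Otimes>\<^sub>M uniform01) borel (\<lambda>(x, v). (x, g (S x v))) =
        distr (distr \<gamma> borel E) borel (\<lambda>(x, r). (x, g r))"
      unfolding S[symmetric] using borel_measurable_Pair[OF measurable_fst_borel S_meas]
      by (subst distr_distr) (auto simp: comp_def case_prod_beta' sets_\<mu> intro: measurable_pair_uniform01)
    also have "\<dots> = \<gamma>"
      using E_meas sets_\<gamma> by (simp add: distr_distr comp_def E_def case_prod_beta' g_e distr_id2)
    finally show "distr (\<mu> \<Otimes>\<^sub>M uniform01) borel (\<lambda>(x, v). (x, g (S x v))) = \<gamma>" .
  qed
qed

theorem mainTheorem19:
  fixes \<gamma> :: "nat \<Rightarrow> ('x::polish_space \<times> 'y::polish_space) measure"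
    and \<mu> :: "'x measure"
  assumes sets_\<gamma>: "\<And>n. n \<ge> 1 \<Longrightarrow> sets (\<gamma> n) = sets borel"
    and prob_\<gamma>: "\<And>n. n \<ge> 1 \<Longrightarrow> prob_space (\<gamma> n)"
    and marg: "\<And>n. n \<ge> 1 \<Longrightarrow> distr (\<gamma> n) borel fst = \<mu>"
  shows "\<exists>(\<xi> :: real \<Rightarrow> 'x) (\<xi>s :: nat \<Rightarrow> real \<Rightarrow> 'y).
           \<xi> \<in> borel_measurable (restrict_space borel {0<..<1}) \<and>
           (\<forall>n\<ge>1. \<xi>s n \<in> borel_measurable (restrict_space borel {0<..<1}) \<and>
                    distr (restrict_space lborel {0<..<1}) borel (\<lambda>u. (\<xi> u, \<xi>s n u)) = \<gamma> n)"
proof -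
  have "\<forall>n\<in>{1..}. \<exists>S. case_prod S \<in> borel_measurable borel \<and>
      distr (\<mu> \<Otimes>\<^sub>M uniform01) borel (\<lambda>(x, v). (x, S x v)) = \<gamma> n"
    using polish_disintegration[OF sets_\<gamma> prob_space.finite_measure[OF prob_\<gamma>] marg] by simp
  then obtain S :: "nat \<Rightarrow> 'x \<Rightarrow> real \<Rightarrow> 'y" where S: "\<forall>n\<in>{1..}. case_prod (S n) \<in> borel_measurable borel \<and>
      distr (\<mu> \<Otimes>\<^sub>M uniform01) borel (\<lambda>(x, v). (x, S n x v)) = \<gamma> n"
    by (rule bchoice[THEN exE])
  have sets_\<mu>: "sets \<mu> = sets borel" and prob_\<mu>: "prob_space \<mu>"
    using marg[of 1] prob_space_distr_fst_borel[OF sets_\<gamma> prob_\<gamma>, of 1] by auto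
  obtain T :: "real \<Rightarrow> 'x \<times> real" where T_meas: "T \<in> borel_measurable borel"
    and T: "\<And>f :: 'x \<times> real \<Rightarrow> 'x \<times> 'y. f \<in> borel_measurable borel \<Longrightarrow>
      distr uniform01 borel (f \<circ> T) = distr (\<mu> \<Otimes>\<^sub>M uniform01) borel f"
    by (erule sample_pair_uniform01[OF sets_\<mu> prob_\<mu>])
  show ?thesis
  proof (intro exI conjI allI impI)
    show "fst \<circ> T \<in> borel_measurable (restrict_space borel {0<..<1})"
      using T_meas by (intro measurable_restrict_space1) simp
    fix n :: nat assume "n \<ge> 1"
    then have S_meas: "case_prod (S n) \<in> borel_measurable borel"
      and S_n: "distr (\<mu> \<Otimes>\<^sub>M uniform01) borel (\<lambda>(x, v). (x, S n x v)) = \<gamma> n"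
      using S by auto
    then show "case_prod (S n) \<circ> T \<in> borel_measurable (restrict_space borel {0<..<1})"
      using T_meas by (intro measurable_restrict_space1) simp
    show "distr uniform01 borel (\<lambda>u. ((fst \<circ> T) u, (case_prod (S n) \<circ> T) u)) = \<gamma> n"
      using T[OF borel_measurable_Pair[OF measurable_fst_borel S_meas]] S_n
      by (simp add: comp_def case_prod_beta')
  qed
qed

end
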